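(* For each $n$, let $A$ be the symmetric, hollow, binary adjacency matrix of a random simple undirected graph on $[n]$ whose vertex set is partitioned into known nonempty blocks $\mathcal{B}_1,\dots,\mathcal{B}_{K^*}$; for $1\le\ell,k\le K^*$ let $\mathcal{B}_{\ell,k}=\mathcal{B}_\ell\times\mathcal{B}_k$ if $\ell\ne k$, $\mathcal{B}_{\ell,\ell}=\binom{\mathcal{B}_\ell}{2}$, $n_{\ell,k}=|\mathcal{B}_{\ell,k}|$, and $n_{**}=\min_{\ell,k}n_{\ell,k}$. Let $\Gamma$ be a finite index set and, for each $\gamma\in\Gamma$, $\gamma_B$ a nonempty set of unordered block pairs $\{\ell,k\}$ ($\ell=k$ allowed) such that $\{\gamma_B\}_{\gamma\in\Gamma}$ partitions the $((K^* )^2+K^* )/2$ unordered pairs $\{\ell,k\}$, $1\le \ell\le k\le K^*$; let $n_\gamma=\sum_{\{\ell,k\}\in\gamma_B}n_{\ell,k}$. Assume the null model $H_0$ holds: there are $B^{(0)}_\gamma\in(0,1)$ such that all $A_{v,v'}$ with $(v,v')\in\mathcal{B}_{\ell,k}$, $\{\ell,k\}\in\gamma_B$, are independent $\operatorname{Bern}(B^{(0)}_\gamma)$; write $\mathbb{P}_0$ for its probability and $B^{(1)}_{\ell,k}=B^{(0)}_\gamma$ for $\{\ell,k\}\in\gamma_B$ for the resulting block connection probabilities. Assume there exist $n_0$ and $c_1\in(0,1/2)$ such that for all $n>n_0$ and all pairs $\{\ell,k\}$, $$B^{(1)}_{\ell,k}>\frac{\log n_{\ell,k}}{n_{\ell,k}}\quad\text{and}\quad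 B^{(1)}_{\ell,k}<\tfrac12-c_1.$$ Define $\widehat{B}^{(1)}_{\ell,k}=\frac{1}{n_{\ell,k}}\sum_{(v,v')\in\mathcal{B}_{\ell,k}}A_{v,v'}$, $\widehat{B}^{(0)}_{\gamma}=\frac{1}{n_{\gamma}}\sum_{\{\ell,k\}\in\gamma_B}\sum_{(v,v')\in\mathcal{B}_{\ell,k}}A_{v,v'}$, $$-2\widehat\lambda_T=2\sum_{\gamma\in\Gamma}\sum_{\{\ell,k\}\in\gamma_B}n_{\ell,k}\left[\widehat B^{(1)}_{\ell,k}\log\left(\frac{\widehat B^{(1)}_{\ell,k}(1-\widehat B^{(0)}_\gamma)}{\widehat B^{(0)}_\gamma(1-\widehat B^{(1)}_{\ell,k})}\right)+\log\left(\frac{1-\widehat B^{(1)}_{\ell,k}}{1-\widehat B^{(0)}_\gamma}\right)\right],$$ and $$\widehat\Delta_{T,\mathrm{BIC}}=-2\widehat\lambda_T-\Big(\sum_{\gamma\in\Gamma}(|\gamma_B|-1)\Big)\log\binom{n}{2}.$$ Let $c_2$ be a constant with $0<c_2\leq \frac{1}{16}\left(1-\frac{2|\Gamma|}{(K^* )^2+K^*}\right)$. Then for all $n$ sufficiently large, $$\mathbb{P}_{0}\left[\widehat{\Delta}_{T,\mathrm{BIC}}<0\right]\geq 1-O\left(\exp\left\{-((K^* )^2+K^* )-\frac{c_2\log n_{**}}{2+2\sqrt{c_2}/3}\right\}\right).$$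
   Context: $\widehat\Delta_{T,\mathrm{BIC}}$ is the difference of BIC-penalized (negative twice log) maximized likelihoods between the tied repeated-motif hierarchical SBM (parameters indexed by $\Gamma$) and the full $K^*$-block SBM with the same known block partition; a negative value favors the tied model. The asymptotics are as $n\to\infty$, with the block structure and parameters allowed to depend on $n$. The summands of $-2\widehat\lambda_T$ are $2n_{\ell,k}$ times the Kullback–Leibler divergence between $\operatorname{Bern}(\widehat B^{(1)}_{\ell,k})$ and $\operatorname{Bern}(\widehat B^{(0)}_\gamma)$. *)

theory Defs
  imports "HOL-Probability.Probability"
begin

(* Vertices are {0..<n}; b :: nat => nat assigns vertices to blocks {0..<K}. *)
definition block :: "(nat \<Rightarrow> nat) \<Rightarrow> nat \<Rightarrow> nat \<Rightarrow> nat set" where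
  "block b n l = {v. v < n \<and> b v = l}"

definition block_pairs :: "(nat \<Rightarrow> nat) \<Rightarrow> nat \<Rightarrow> nat \<Rightarrow> nat \<Rightarrow> (nat \<times> nat) set" where
  "block_pairs b n l k =
     (if l = k then {(v, v'). v \<in> block b n l \<and> v' \<in> block b n l \<and> v < v'}
      else block b n l \<times> block b n k)"

definition npair :: "(nat \<Rightarrow> nat) \<Rightarrow> nat \<Rightarrow> nat \<Rightarrow> nat \<Rightarrow> nat" where
  "npair b n l k = card (block_pairs b n l k)"

(* unordered block pairs {l,k}, represented as (l,k) with l <= k < K *)
definition upairs :: "nat \<Rightarrow> (nat \<times> nat) set" where
  "upairs K = {(l, k). l \<le> k \<and> k < K}"

definition nmin :: "(nat \<Rightarrow> nat) \<Rightarrow> nat \<Rightarrow> nat \<Rightarrow> nat" where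
  "nmin b n K = Min ((\<lambda>(l, k). npair b n l k) ` upairs K)"

(* potential edges {v,v'} of a simple graph on [n], as pairs v < v' *)
definition edges :: "nat \<Rightarrow> (nat \<times> nat) set" where
  "edges n = {(v, v'). v < v' \<and> v' < n}"

definition adj :: "(nat \<times> nat \<Rightarrow> bool) \<Rightarrow> nat \<Rightarrow> nat \<Rightarrow> real" where
  "adj \<omega> v v' = (if v = v' then 0 else if \<omega> (min v v', max v v') then 1 else 0)"

definition motif_class :: "(nat \<times> nat \<Rightarrow> 'g) \<Rightarrow> nat \<Rightarrow> 'g \<Rightarrow> (nat \<times> nat) set" where
  "motif_class g K \<gamma> = {lk \<in> upairs K. g lk = \<gamma>}"

definition n_gamma :: "(nat \<Rightarrow> nat) \<Rightarrow> nat \<Rightarrow> (nat \<times> nat \<Rightarrow> 'g) \<Rightarrow> nat \<Rightarrow> 'g \<Rightarrow> nat" where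
  "n_gamma b n g K \<gamma> = (\<Sum>(l, k)\<in>motif_class g K \<gamma>. npair b n l k)"

definition Bhat1 :: "(nat \<Rightarrow> nat) \<Rightarrow> nat \<Rightarrow> (nat \<times> nat \<Rightarrow> bool) \<Rightarrow> nat \<Rightarrow> nat \<Rightarrow> real" where
  "Bhat1 b n \<omega> l k =
     (\<Sum>(v, v')\<in>block_pairs b n l k. adj \<omega> v v') / real (npair b n l k)"

definition Bhat0 :: "(nat \<Rightarrow> nat) \<Rightarrow> nat \<Rightarrow> (nat \<times> nat \<Rightarrow> 'g) \<Rightarrow> nat \<Rightarrow> (nat \<times> nat \<Rightarrow> bool) \<Rightarrow> 'g \<Rightarrow> real" where
  "Bhat0 b n g K \<omega> \<gamma> =
     (\<Sum>(l, k)\<in>motif_class g K \<gamma>. \<Sum>(v, v')\<in>block_pairs b n l k. adj \<omega> v v')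
       / real (n_gamma b n g K \<gamma>)"

(* KL divergence between Bern(p) and Bern(q), with the convention 0 log 0 = 0 *)
definition bern_kl :: "real \<Rightarrow> real \<Rightarrow> real" where
  "bern_kl p q = (if p = 0 then 0 else p * ln (p / q))
               + (if p = 1 then 0 else (1 - p) * ln ((1 - p) / (1 - q)))"

definition neg2lambda :: "(nat \<Rightarrow> nat) \<Rightarrow> nat \<Rightarrow> (nat \<times> nat \<Rightarrow> 'g) \<Rightarrow> nat \<Rightarrow> (nat \<times> nat \<Rightarrow> bool) \<Rightarrow> real" where
  "neg2lambda b n g K \<omega> =
     2 * (\<Sum>\<gamma>\<in>g ` upairs K. \<Sum>(l, k)\<in>motif_class g K \<gamma>.
            real (npair b n l k) * bern_kl (Bhat1 b n \<omega> l k) (Bhat0 b n g K \<omega> \<gamma>))"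

definition Delta_BIC :: "(nat \<Rightarrow> nat) \<Rightarrow> nat \<Rightarrow> (nat \<times> nat \<Rightarrow> 'g) \<Rightarrow> nat \<Rightarrow> (nat \<times> nat \<Rightarrow> bool) \<Rightarrow> real" where
  "Delta_BIC b n g K \<omega> =
     neg2lambda b n g K \<omega>
     - (\<Sum>\<gamma>\<in>g ` upairs K. real (card (motif_class g K \<gamma>)) - 1) * ln (real (n choose 2))"

definition null_law :: "(nat \<Rightarrow> nat) \<Rightarrow> (nat \<times> nat \<Rightarrow> 'g) \<Rightarrow> ('g \<Rightarrow> real) \<Rightarrow> nat \<Rightarrow> (nat \<times> nat \<Rightarrow> bool) pmf" where
  "null_law b g p n = Pi_pmf (edges n) False
     (\<lambda>(v, v'). bernoulli_pmf (p (g (min (b v) (b v'), max (b v) (b v')))))"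

end

theory Submission
  imports Defs
begin

text \<open>
  Since the pooled estimate \<open>Bhat0 \<gamma>\<close> maximises the tied likelihood, the likelihood-ratio
  statistic is at most the deviance of the block estimates from the true null parameters:
  \<open>-2 lambda_T \<le> 2 \<Sum>\<^sub>l\<^sub>\<le>\<^sub>k n\<^sub>l\<^sub>k KL(Bhat1\<^sub>l\<^sub>k, B\<^sub>l\<^sub>k)\<close>.
  Each summand is \<open>m KL(X/m, q)\<close> for a binomial \<open>X\<close>; the Chernoff bound on either side of
  \<open>m q\<close> gives \<open>P(m KL(X/m, q) \<ge> t) \<le> 2 e\<^sup>-\<^sup>t\<close>, hence \<open>E exp(m KL(X/m, q) / 2) \<le> 9\<close>.
  Distinct block pairs use disjoint sets of independent edges, so the exponential moment of the
  sum is at most \<open>9\<^sup>M\<close> with \<open>M = (K\<^sup>2 + K) / 2\<close>, and Markov's inequality bounds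
  \<open>P(Delta_BIC \<ge> 0)\<close> by \<open>exp(- d L / 4 + M ln 9)\<close>, where \<open>L = ln (n choose 2)\<close> and
  \<open>d = \<Sum>\<^sub>\<gamma> (|\<gamma>\<^sub>B| - 1) \<ge> 16 c\<^sub>2 M\<close>.  Once \<open>c\<^sub>2 L \<ge> 4\<close> this is below the claimed
  bound, with constant 1.
\<close>

section \<open>Binomial tails in terms of the Kullback-Leibler divergence\<close>

lemma power_eq_exp_mult_ln: "0 < x \<Longrightarrow> x ^ j = exp (real j * ln x)" for x :: real
  by (simp add: exp_ln ln_realpow[symmetric])

lemma power_le_exp_bern_kl_tilt:
  fixes n k :: nat and p q :: real
  assumes p: "0 < p" "p < 1" and q: "0 < q" "q < 1" and kn: "k \<le> n"
    and side: "(n * q \<le> k \<and> p \<le> q) \<or> (k \<le> n * q \<and> q \<le> p)"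
  shows "p ^ k * (1 - p) ^ (n - k) \<le> exp (- (n * bern_kl q p)) * (q ^ k * (1 - q) ^ (n - k))"
proof -
  define a where "a = ln q - ln p"
  define b where "b = ln (1 - q) - ln (1 - p)"
  have kl: "n * bern_kl q p = n * q * a + (n - n * q) * b"
    using p q by (simp add: bern_kl_def a_def b_def ln_div algebra_simps)
  have "0 \<le> (k - n * q) * (a - b)"
  proof (cases "n * q \<le> k \<and> p \<le> q")
    case True
    then have "ln p \<le> ln q" "ln (1 - q) \<le> ln (1 - p)" using p q by auto
    then have "0 \<le> a - b" by (simp add: a_def b_def)
    with True show ?thesis by simp
  next
    case False
    with side have "k \<le> n * q" "q \<le> p" by auto
    then have "ln q \<le> ln p" "ln (1 - p) \<le> ln (1 - q)" using p q by auto
    then have "a - b \<le> 0" by (simp add: a_def b_def)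
    with \<open>k \<le> n * q\<close> show ?thesis by (simp add: mult_nonpos_nonpos)
  qed
  then have "k * ln p + (n - k) * ln (1 - p) \<le> - (n * bern_kl q p) + k * ln q + (n - k) * ln (1 - q)"
    using kn unfolding kl by (simp add: a_def b_def of_nat_diff algebra_simps)
  then show ?thesis
    using p q kn by (simp add: power_eq_exp_mult_ln of_nat_diff flip: exp_add)
qed

lemma binomial_pmf_le_exp_bern_kl_tilt:
  fixes n k :: nat and p q :: real
  assumes p: "0 < p" "p < 1" and q: "0 \<le> q" "q \<le> 1" and kn: "k \<le> n"
    and side: "(n * q \<le> k \<and> p \<le> q) \<or> (k \<le> n * q \<and> q \<le> p)"
  shows "pmf (binomial_pmf n p) k \<le> exp (- (n * bern_kl q p)) * pmf (binomial_pmf n q) k"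
proof -
  consider "q = 0" | "q = 1" | "0 < q" "q < 1" using q by linarith
  then show ?thesis
  proof cases
    case 1
    with side p have "k = 0" by auto
    moreover have "exp (- (n * bern_kl q p)) = (1 - p) ^ n"
      using 1 p by (simp add: bern_kl_def power_eq_exp_mult_ln ln_div)
    ultimately show ?thesis using 1 p by simp
  next
    case 2
    with side p kn have "k = n" by auto
    moreover have "exp (- (n * bern_kl q p)) = p ^ n"
      using 2 p by (simp add: bern_kl_def power_eq_exp_mult_ln ln_div)
    ultimately show ?thesis using 2 p by simp
  next
    case 3
    from mult_left_mono[OF power_le_exp_bern_kl_tilt[OF p 3 kn side], of "real (n choose k)"]
    show ?thesis using p 3 by (simp add: ac_simps)
  qed
qed

lemma binomial_pmf_prob_le_exp_bern_kl:
  fixes n :: nat and p q :: real and A :: "nat set"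
  assumes p: "0 < p" "p < 1" and q: "0 \<le> q" "q \<le> 1"
    and side: "\<And>k. k \<in> A \<Longrightarrow> k \<le> n \<Longrightarrow> (n * q \<le> k \<and> p \<le> q) \<or> (k \<le> n * q \<and> q \<le> p)"
  shows "measure_pmf.prob (binomial_pmf n p) A \<le> exp (- (n * bern_kl q p))"
proof -
  let ?A = "A \<inter> {..n}"
  have "measure_pmf.prob (binomial_pmf n p) A = (\<Sum>k\<in>?A. pmf (binomial_pmf n p) k)"
    using p measure_Int_set_pmf[of "binomial_pmf n p" A] by (simp add: measure_measure_pmf_finite)
  also have "\<dots> \<le> (\<Sum>k\<in>?A. exp (- (n * bern_kl q p)) * pmf (binomial_pmf n q) k)"
    using p q side by (intro sum_mono binomial_pmf_le_exp_bern_kl_tilt) auto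
  also have "\<dots> = exp (- (n * bern_kl q p)) * measure_pmf.prob (binomial_pmf n q) ?A"
    by (simp add: measure_measure_pmf_finite sum_distrib_left)
  also have "\<dots> \<le> exp (- (n * bern_kl q p))"
    by (simp add: mult_left_le)
  finally show ?thesis .
qed

lemma binomial_pmf_prob_bern_kl_ge_le:
  fixes n :: nat and p t :: real
  assumes p: "0 < p" "p < 1"
  shows "measure_pmf.prob (binomial_pmf n p) {k. t \<le> n * bern_kl (k / n) p} \<le> 2 * exp (- t)"
proof (cases "t \<le> 0")
  case True
  have "measure_pmf.prob (binomial_pmf n p) {k. t \<le> n * bern_kl (k / n) p} \<le> 1"
    by simp
  also have "1 \<le> exp (- t)" using True by simp
  finally show ?thesis using exp_gt_zero[of "- t"] by linarith
next
  case False
  define S where "S = {k. k \<le> n \<and> t \<le> n * bern_kl (k / n) p}"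
  have S_n: "n > 0" if "k \<in> S" for k
    using that False by (cases n) (auto simp: S_def)
  \<comment> \<open>a one-sided part of the tail is controlled by its point closest to \<open>n p\<close>\<close>
  have one_side: "measure_pmf.prob (binomial_pmf n p) B \<le> exp (- t)"
    if "B \<subseteq> S" "a \<in> B" "\<And>k. k \<in> B \<Longrightarrow> (a \<le> k \<and> p \<le> a / n) \<or> (k \<le> a \<and> a / n \<le> p)" for B a
  proof -
    have "a \<le> n" "n > 0" "t \<le> n * bern_kl (a / n) p"
      using that(1,2) S_n by (auto simp: S_def)
    then have "measure_pmf.prob (binomial_pmf n p) B \<le> exp (- (n * bern_kl (a / n) p))"
      using that(3) by (intro binomial_pmf_prob_le_exp_bern_kl p) auto
    also have "\<dots> \<le> exp (- t)"
      using \<open>t \<le> n * bern_kl (a / n) p\<close> by simp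
    finally show ?thesis .
  qed
  define S1 where "S1 = {k \<in> S. p \<le> k / n}"
  define S2 where "S2 = {k \<in> S. k / n < p}"
  have fin: "finite S1" "finite S2" by (auto simp: S1_def S2_def S_def)
  have "measure_pmf.prob (binomial_pmf n p) S1 \<le> exp (- t)"
  proof (cases "S1 = {}")
    case False
    then have "Min S1 \<in> S1" "\<And>k. k \<in> S1 \<Longrightarrow> Min S1 \<le> k" using fin by auto
    then show ?thesis by (intro one_side[of _ "Min S1"]) (auto simp: S1_def)
  qed simp
  moreover have "measure_pmf.prob (binomial_pmf n p) S2 \<le> exp (- t)"
  proof (cases "S2 = {}")
    case False
    then have "Max S2 \<in> S2" "\<And>k. k \<in> S2 \<Longrightarrow> k \<le> Max S2" using fin by auto
    then show ?thesis by (intro one_side[of _ "Max S2"]) (auto simp: S2_def less_imp_le)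
  qed simp
  moreover have "S = S1 \<union> S2" by (auto simp: S1_def S2_def)
  moreover have "measure_pmf.prob (binomial_pmf n p) {k. t \<le> n * bern_kl (k / n) p}
      = measure_pmf.prob (binomial_pmf n p) S"
    using p measure_Int_set_pmf[of "binomial_pmf n p" "{k. t \<le> n * bern_kl (k / n) p}"]
    by (simp add: S_def Int_def conj_commute)
  ultimately show ?thesis
    using measure_subadditive[of S1 "measure_pmf (binomial_pmf n p)" S2] by simp
qed

lemma exp_half_le_layer_sum:
  fixes y :: real and J :: nat
  assumes "y < real J + 1"
  shows "exp (y / 2) \<le> exp (1 / 2) + (\<Sum>i<J. if real i + 1 \<le> y then exp ((real i + 2) / 2) else 0)"
proof (cases "y < 1")
  case True
  then have "exp (y / 2) \<le> exp (1 / 2)" by simp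
  moreover have "0 \<le> (\<Sum>i<J. if real i + 1 \<le> y then exp ((real i + 2) / 2) else 0)"
    by (intro sum_nonneg) simp
  ultimately show ?thesis by linarith
next
  case False
  then have "0 \<le> \<lfloor>y\<rfloor> - 1" by linarith
  then obtain i :: nat where "\<lfloor>y\<rfloor> = int i + 1" by (metis diff_add_cancel zero_le_imp_eq_int)
  then have i: "real i + 1 = \<lfloor>y\<rfloor>" by simp
  then have "i < J" "real i + 1 \<le> y" using assms by linarith+
  have "exp (y / 2) \<le> exp ((real i + 2) / 2)" using i by simp linarith
  also have "\<dots> = (if real i + 1 \<le> y then exp ((real i + 2) / 2) else 0)"
    using \<open>real i + 1 \<le> y\<close> by simp
  also have "\<dots> \<le> (\<Sum>i<J. if real i + 1 \<le> y then exp ((real i + 2) / 2) else 0)"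
    using \<open>i < J\<close> by (intro member_le_sum) auto
  finally show ?thesis using exp_gt_zero[of "1 / 2"] by linarith
qed

lemma geometric_exp_half_sum_le: "(\<Sum>i<J. exp (- (1 / 2)) ^ i) \<le> (3 :: real)"
proof -
  define x :: real where "x = exp (- (1 / 2))"
  have "3 / 2 \<le> exp (1 / 2 :: real)"
    using exp_ge_add_one_self[of "1 / 2 :: real"] by simp
  then have x: "0 < x" "x \<le> 2 / 3"
    by (auto simp: x_def exp_minus field_simps)
  have "(\<Sum>i<J. x ^ i) = (1 - x ^ J) / (1 - x)"
    using x by (simp add: sum_gp_strict)
  also have "\<dots> \<le> 1 / (1 - x)"
    using x by (intro divide_right_mono) auto
  also have "\<dots> \<le> 3"
    using x by (simp add: field_simps)
  finally show ?thesis by (simp add: x_def)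
qed

lemma nn_integral_exp_half_le_of_exp_tail:
  fixes M :: "'a pmf" and Y :: "'a \<Rightarrow> real"
  assumes fin: "finite (set_pmf M)"
    and tail: "\<And>t. measure_pmf.prob M {x. t \<le> Y x} \<le> 2 * exp (- t)"
  shows "(\<integral>\<^sup>+x. exp (Y x / 2) \<partial>M) \<le> 9"
proof -
  let ?S = "set_pmf M"
  define J where "J = nat \<lceil>\<Sum>x\<in>?S. \<bar>Y x\<bar>\<rceil>"
  define layer where "layer i x = (if real i + 1 \<le> Y x then exp ((real i + 2) / 2) else 0)" for i x
  have Y_J: "Y x < real J + 1" if "x \<in> ?S" for x
  proof -
    have "Y x \<le> \<bar>Y x\<bar>" by simp
    also have "\<dots> \<le> (\<Sum>x\<in>?S. \<bar>Y x\<bar>)"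
      using fin that by (intro member_le_sum) auto
    finally have "Y x \<le> (\<Sum>x\<in>?S. \<bar>Y x\<bar>)" .
    then show ?thesis unfolding J_def by linarith
  qed
  have layer_mass: "(\<Sum>x\<in>?S. pmf M x * layer i x)
      = exp ((real i + 2) / 2) * measure_pmf.prob M {x. real i + 1 \<le> Y x}" for i
  proof -
    have "(\<Sum>x\<in>?S. pmf M x * layer i x) = exp ((real i + 2) / 2) * (\<Sum>x\<in>{x\<in>?S. real i + 1 \<le> Y x}. pmf M x)"
      using fin by (simp add: layer_def sum_distrib_left sum.inter_filter)
        (intro sum.cong refl, simp add: add.commute mult.commute)
    also have "(\<Sum>x\<in>{x\<in>?S. real i + 1 \<le> Y x}. pmf M x) = measure_pmf.prob M {x. real i + 1 \<le> Y x}"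
      using fin measure_Int_set_pmf[of M "{x. real i + 1 \<le> Y x}"]
      by (simp add: measure_measure_pmf_finite Int_def conj_commute)
    finally show ?thesis .
  qed
  have "(\<Sum>x\<in>?S. pmf M x * exp (Y x / 2)) \<le> (\<Sum>x\<in>?S. pmf M x * (exp (1 / 2) + (\<Sum>i<J. layer i x)))"
    unfolding layer_def by (intro sum_mono mult_left_mono exp_half_le_layer_sum Y_J) simp_all
  also have "\<dots> = exp (1 / 2) * (\<Sum>x\<in>?S. pmf M x) + (\<Sum>i<J. \<Sum>x\<in>?S. pmf M x * layer i x)"
    by (simp add: algebra_simps sum.distrib sum_distrib_left sum_distrib_right sum.swap[of _ ?S])
  also have "\<dots> \<le> exp 1 + (\<Sum>i<J. exp ((real i + 2) / 2) * (2 * exp (- (real i + 1))))"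
    unfolding layer_mass using fin by (intro add_mono sum_mono mult_left_mono tail) (auto simp: sum_pmf_eq_1)
  also have "(\<Sum>i<J. exp ((real i + 2) / 2) * (2 * exp (- (real i + 1)))) = 2 * (\<Sum>i<J. exp (- (1 / 2)) ^ i)"
    by (simp add: sum_distrib_left mult.left_commute flip: exp_add exp_of_nat_mult)
       (simp add: field_simps)
  finally have "(\<Sum>x\<in>?S. pmf M x * exp (Y x / 2)) \<le> 9"
    using exp_le geometric_exp_half_sum_le[of J] by linarith
  moreover have "(\<integral>\<^sup>+x. exp (Y x / 2) \<partial>M) = ennreal (\<Sum>x\<in>?S. pmf M x * exp (Y x / 2))"
    using fin by (simp add: nn_integral_measure_pmf_finite mult.commute flip: ennreal_mult)
  ultimately show ?thesis
    using ennreal_leI[of _ 9] by (metis ennreal_numeral)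
qed

lemma binomial_pmf_nn_integral_exp_bern_kl_le:
  fixes n :: nat and p :: real
  assumes "0 < p" "p < 1"
  shows "(\<integral>\<^sup>+k. exp (n * bern_kl (real k / n) p / 2) \<partial>measure_pmf (binomial_pmf n p)) \<le> 9"
  using assms by (intro nn_integral_exp_half_le_of_exp_tail binomial_pmf_prob_bern_kl_ge_le) auto

section \<open>The pooled Bernoulli estimate\<close>

lemma bern_kl_change_reference_le:
  fixes m s B q :: real
  assumes s: "0 \<le> s" "s \<le> m" and q: "0 < q" "q < 1"
    and B_pos: "0 < s \<Longrightarrow> 0 < B" and B_lt1: "s < m \<Longrightarrow> B < 1"
  shows "m * bern_kl (s / m) B - m * bern_kl (s / m) q
    \<le> s * (q / B - 1) + (m - s) * ((1 - q) / (1 - B) - 1)"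
proof (cases "m = 0")
  case True
  then show ?thesis using s by (simp add: bern_kl_def)
next
  case False
  then have m0: "0 < m" using s by linarith
  define x where "x = s / m"
  have mx: "m * x = s" "m * (1 - x) = m - s" using m0 by (simp_all add: x_def algebra_simps)
  have succ: "m * (if x = 0 then 0 else x * ln (x / B)) - m * (if x = 0 then 0 else x * ln (x / q))
      \<le> s * (q / B - 1)"
  proof (cases "x = 0")
    case False
    then have "0 < s" "0 < x" using s m0 by (auto simp: x_def)
    then have "ln (x / B) - ln (x / q) = ln (q / B)" using B_pos q by (simp add: ln_div)
    then have "m * (x * ln (x / B)) - m * (x * ln (x / q)) = s * ln (q / B)"
      by (metis mx(1) mult.assoc right_diff_distrib)
    also have "\<dots> \<le> s * (q / B - 1)"
      using \<open>0 < s\<close> B_pos q by (intro mult_left_mono ln_le_minus_one) auto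
    finally show ?thesis using False by simp
  qed (use mx in simp)
  have fail: "m * (if x = 1 then 0 else (1 - x) * ln ((1 - x) / (1 - B)))
      - m * (if x = 1 then 0 else (1 - x) * ln ((1 - x) / (1 - q)))
      \<le> (m - s) * ((1 - q) / (1 - B) - 1)"
  proof (cases "x = 1")
    case False
    then have "s < m" "0 < 1 - x" using s m0 by (auto simp: x_def field_simps)
    then have "ln ((1 - x) / (1 - B)) - ln ((1 - x) / (1 - q)) = ln ((1 - q) / (1 - B))"
      using B_lt1 q by (simp add: ln_div)
    then have "m * ((1 - x) * ln ((1 - x) / (1 - B))) - m * ((1 - x) * ln ((1 - x) / (1 - q)))
        = (m - s) * ln ((1 - q) / (1 - B))"
      by (metis mx(2) mult.assoc right_diff_distrib)
    also have "\<dots> \<le> (m - s) * ((1 - q) / (1 - B) - 1)"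
      using \<open>s < m\<close> B_lt1 q by (intro mult_left_mono ln_le_minus_one) auto
    finally show ?thesis using False by simp
  qed (use mx in simp)
  show ?thesis
    using succ fail unfolding bern_kl_def x_def[symmetric] by (simp add: algebra_simps)
qed

lemma sum_bern_kl_pooled_le:
  fixes C :: "'i set" and m :: "'i \<Rightarrow> nat" and s :: "'i \<Rightarrow> real" and q :: real
  assumes fin: "finite C" and s: "\<And>i. i \<in> C \<Longrightarrow> 0 \<le> s i \<and> s i \<le> m i"
    and q: "0 < q" "q < 1"
  shows "(\<Sum>i\<in>C. m i * bern_kl (s i / m i) (sum s C / sum m C))
    \<le> (\<Sum>i\<in>C. m i * bern_kl (s i / m i) q)"
proof -
  define S where "S = sum s C"
  define T where "T = real (sum m C)"
  define B where "B = S / T"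
  have ST: "0 \<le> S" "S \<le> T"
    using s by (auto simp: S_def T_def of_nat_sum intro: sum_nonneg sum_mono)
  have B_pos: "0 < B" if "i \<in> C" "0 < s i" for i
  proof -
    have "s i \<le> S" unfolding S_def using fin that s by (intro member_le_sum) auto
    then show ?thesis using that ST by (simp add: B_def)
  qed
  have B_lt1: "B < 1" if "i \<in> C" "s i < m i" for i
  proof -
    have "S < T" unfolding S_def T_def of_nat_sum using fin that s
      by (intro sum_strict_mono_ex1) auto
    then show ?thesis using ST by (simp add: B_def)
  qed
  have "(\<Sum>i\<in>C. m i * bern_kl (s i / m i) B) - (\<Sum>i\<in>C. m i * bern_kl (s i / m i) q)
      \<le> (\<Sum>i\<in>C. s i * (q / B - 1) + (m i - s i) * ((1 - q) / (1 - B) - 1))"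
    unfolding sum_subtractf[symmetric]
    using s q B_pos B_lt1 by (intro sum_mono bern_kl_change_reference_le) auto
  also have "\<dots> = S * (q / B - 1) + (T - S) * ((1 - q) / (1 - B) - 1)"
    by (simp add: S_def T_def sum.distrib sum_distrib_right[symmetric] sum_subtractf of_nat_sum)
  \<comment> \<open>the first-order condition of the pooled MLE: this linear term vanishes\<close>
  also have "\<dots> \<le> 0"
  proof -
    consider "S = 0" | "S = T" "0 < S" | "0 < S" "S < T" using ST by linarith
    then show ?thesis
    proof cases
      case 1
      then show ?thesis using q ST by (simp add: B_def)
    next
      case 2
      then show ?thesis using q by (simp add: B_def mult_nonneg_nonpos)
    next
      case 3
      then have "0 < B" "B < 1" by (auto simp: B_def field_simps)
      with 3 show ?thesis by (simp add: B_def field_simps)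
    qed
  qed
  finally show ?thesis by (simp add: B_def S_def T_def)
qed

section \<open>Integrals over disjoint blocks of coordinates\<close>

lemma nn_integral_Pi_pmf_prod_disjoint:
  fixes S :: "'i \<Rightarrow> 'a set" and f :: "'i \<Rightarrow> ('a \<Rightarrow> 'b) \<Rightarrow> ennreal"
  assumes "finite J" "\<And>i. i \<in> J \<Longrightarrow> finite (S i)" "disjoint_family_on S J"
    and "\<And>i \<omega> \<omega>'. i \<in> J \<Longrightarrow> (\<And>x. x \<in> S i \<Longrightarrow> \<omega> x = \<omega>' x) \<Longrightarrow> f i \<omega> = f i \<omega>'"
  shows "(\<integral>\<^sup>+\<omega>. (\<Prod>i\<in>J. f i \<omega>) \<partial>Pi_pmf (\<Union>i\<in>J. S i) d D)
    = (\<Prod>i\<in>J. \<integral>\<^sup>+\<omega>. f i \<omega> \<partial>Pi_pmf (S i) d D)"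
  using assms
proof (induction J rule: finite_induct)
  case (insert j J)
  define U where "U = (\<Union>i\<in>J. S i)"
  have fin: "finite (S j)" "finite U" using insert.hyps(1) insert.prems(1) by (auto simp: U_def)
  have disj: "S j \<inter> S i = {}" if "i \<in> J" for i
    using insert.prems(2) insert.hyps(2) that unfolding disjoint_family_on_def by auto
  define merge where "merge = (\<lambda>(a :: 'a \<Rightarrow> 'b, b) x. if x \<in> S j then a x else b x)"
  have f_j: "f j (merge (a, b)) = f j a" for a b
    by (rule insert.prems(3)) (auto simp: merge_def)
  have f_J: "(\<Prod>i\<in>J. f i (merge (a, b))) = (\<Prod>i\<in>J. f i b)" for a b
    using disj by (intro prod.cong refl insert.prems(3)) (auto simp: merge_def)
  have IH: "(\<integral>\<^sup>+\<omega>. (\<Prod>i\<in>J. f i \<omega>) \<partial>Pi_pmf U d D) = (\<Prod>i\<in>J. \<integral>\<^sup>+\<omega>. f i \<omega> \<partial>Pi_pmf (S i) d D)"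
    unfolding U_def
  proof (rule insert.IH)
    show "disjoint_family_on S J"
      using insert.prems(2) by (rule disjoint_family_on_mono[OF subset_insertI])
  qed (meson insert.prems insertCI)+
  have "(\<integral>\<^sup>+\<omega>. (\<Prod>i\<in>insert j J. f i \<omega>) \<partial>Pi_pmf (\<Union>i\<in>insert j J. S i) d D)
      = (\<integral>\<^sup>+\<omega>. (\<Prod>i\<in>insert j J. f i \<omega>) \<partial>map_pmf merge (pair_pmf (Pi_pmf (S j) d D) (Pi_pmf U d D)))"
  proof -
    have "(\<Union>i\<in>insert j J. S i) = S j \<union> U" by (simp add: U_def)
    moreover have "S j \<inter> U = {}" using disj by (auto simp: U_def)
    ultimately show ?thesis
      using fin unfolding merge_def by (simp add: Pi_pmf_union)
  qed
  also have "\<dots> = (\<integral>\<^sup>+a. \<integral>\<^sup>+b. f j a * (\<Prod>i\<in>J. f i b) \<partial>Pi_pmf U d D \<partial>Pi_pmf (S j) d D)"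
    using insert.hyps by (simp add: nn_integral_pair_pmf' f_j f_J)
  also have "\<dots> = (\<integral>\<^sup>+a. f j a \<partial>Pi_pmf (S j) d D) * (\<integral>\<^sup>+b. (\<Prod>i\<in>J. f i b) \<partial>Pi_pmf U d D)"
    by (simp add: nn_integral_cmult nn_integral_multc)
  finally show ?case
    using insert.hyps IH by simp
qed simp

definition sorted_pair :: "nat \<times> nat \<Rightarrow> nat \<times> nat" where
  "sorted_pair = (\<lambda>(v, v'). (min v v', max v v'))"

definition block_edges :: "(nat \<Rightarrow> nat) \<Rightarrow> nat \<Rightarrow> nat \<Rightarrow> nat \<Rightarrow> (nat \<times> nat) set" where
  "block_edges b n l k = sorted_pair ` block_pairs b n l k"

definition edge_block :: "(nat \<Rightarrow> nat) \<Rightarrow> nat \<times> nat \<Rightarrow> nat \<times> nat" where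
  "edge_block b = (\<lambda>(v, v'). sorted_pair (b v, b v'))"

lemma finite_block_pairs: "finite (block_pairs b n l k)"
proof (rule finite_subset)
  show "block_pairs b n l k \<subseteq> {..<n} \<times> {..<n}"
    by (auto simp: block_pairs_def block_def)
qed simp

lemma finite_block_edges: "finite (block_edges b n l k)"
  by (simp add: block_edges_def finite_block_pairs)

lemma block_pairs_memD:
  assumes "(v, v') \<in> block_pairs b n l k" "l \<le> k"
  shows "v \<noteq> v'" "sorted_pair (v, v') \<in> edges n" "edge_block b (sorted_pair (v, v')) = (l, k)"
proof -
  show "v \<noteq> v'"
    using assms by (cases "l = k") (auto simp: block_pairs_def block_def)
  then show "sorted_pair (v, v') \<in> edges n" "edge_block b (sorted_pair (v, v')) = (l, k)"
    using assms unfolding block_pairs_def block_def edges_def edge_block_def sorted_pair_def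
    by (auto simp: min_def max_def split: if_splits)
qed

lemma inj_on_sorted_pair_block_pairs: "l \<le> k \<Longrightarrow> inj_on sorted_pair (block_pairs b n l k)"
  unfolding inj_on_def block_pairs_def block_def sorted_pair_def
  by (auto simp: min_def max_def split: if_splits)

lemma card_block_edges: "l \<le> k \<Longrightarrow> card (block_edges b n l k) = npair b n l k"
  by (simp add: block_edges_def npair_def card_image inj_on_sorted_pair_block_pairs)

lemma edge_block_block_edges: "e \<in> block_edges b n l k \<Longrightarrow> l \<le> k \<Longrightarrow> edge_block b e = (l, k)"
  unfolding block_edges_def using block_pairs_memD(3) by fast

lemma UN_block_edges:
  assumes "\<And>v. v < n \<Longrightarrow> b v < K"
  shows "(\<Union>(l, k)\<in>upairs K. block_edges b n l k) = edges n"
proof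
  show "(\<Union>(l, k)\<in>upairs K. block_edges b n l k) \<subseteq> edges n"
    by (auto simp: upairs_def block_edges_def dest: block_pairs_memD(2))
next
  show "edges n \<subseteq> (\<Union>(l, k)\<in>upairs K. block_edges b n l k)"
  proof
    fix e assume "e \<in> edges n"
    then obtain v v' where e: "e = (v, v')" "v < v'" "v' < n" by (auto simp: edges_def)
    have "e \<in> block_edges b n (min (b v) (b v')) (max (b v) (b v'))"
    proof (cases "b v \<le> b v'")
      case True
      then have "(v, v') \<in> block_pairs b n (min (b v) (b v')) (max (b v) (b v'))"
        using e by (auto simp: block_pairs_def block_def)
      then show ?thesis
        using e unfolding block_edges_def by (force simp: sorted_pair_def)
    next
      case False
      then have "(v', v) \<in> block_pairs b n (min (b v) (b v')) (max (b v) (b v'))"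
        using e by (auto simp: block_pairs_def block_def)
      then show ?thesis
        using e unfolding block_edges_def by (force simp: sorted_pair_def)
    qed
    moreover have "(min (b v) (b v'), max (b v) (b v')) \<in> upairs K"
      using e assms by (auto simp: upairs_def)
    ultimately show "e \<in> (\<Union>(l, k)\<in>upairs K. block_edges b n l k)" by force
  qed
qed

lemma disjoint_family_on_block_edges:
  "disjoint_family_on (\<lambda>(l, k). block_edges b n l k) (upairs K)"
  unfolding disjoint_family_on_def upairs_def
  by (fastforce dest: edge_block_block_edges)

lemma sum_adj_block_pairs:
  assumes "l \<le> k"
  shows "(\<Sum>(v, v')\<in>block_pairs b n l k. adj \<omega> v v') = card {e \<in> block_edges b n l k. \<omega> e}"
proof -
  have "(\<Sum>(v, v')\<in>block_pairs b n l k. adj \<omega> v v')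
      = (\<Sum>x\<in>block_pairs b n l k. if \<omega> (sorted_pair x) then 1 else 0)"
    using block_pairs_memD(1)[OF _ assms]
    by (intro sum.cong refl) (auto simp: adj_def sorted_pair_def)
  also have "\<dots> = (\<Sum>e\<in>block_edges b n l k. if \<omega> e then 1 else 0)"
    unfolding block_edges_def using inj_on_sorted_pair_block_pairs[OF assms]
    by (simp add: sum.reindex)
  also have "\<dots> = card {e \<in> block_edges b n l k. \<omega> e}"
    using finite_block_edges by (simp add: sum.If_cases Int_def)
  finally show ?thesis .
qed

section \<open>The likelihood-ratio statistic under the null model\<close>

lemma finite_upairs: "finite (upairs K)"
  by (rule finite_subset[of _ "{..K} \<times> {..K}"]) (auto simp: upairs_def)

definition block_kl ::
    "(nat \<Rightarrow> nat) \<Rightarrow> nat \<Rightarrow> (nat \<times> nat \<Rightarrow> 'g) \<Rightarrow> ('g \<Rightarrow> real) \<Rightarrow> nat \<times> nat \<Rightarrow> (nat \<times> nat \<Rightarrow> bool) \<Rightarrow> real"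
  where "block_kl b n g p = (\<lambda>(l, k) \<omega>. npair b n l k * bern_kl (Bhat1 b n \<omega> l k) (p (g (l, k))))"

lemma Bhat1_eq_card:
  "l \<le> k \<Longrightarrow> Bhat1 b n \<omega> l k = card {e \<in> block_edges b n l k. \<omega> e} / npair b n l k"
  by (simp add: Bhat1_def sum_adj_block_pairs)

lemma neg2lambda_le_sum_block_kl:
  assumes p: "\<And>\<gamma>. \<gamma> \<in> g ` upairs K \<Longrightarrow> 0 < p \<gamma> \<and> p \<gamma> < 1"
  shows "neg2lambda b n g K \<omega> \<le> 2 * (\<Sum>x\<in>upairs K. block_kl b n g p x \<omega>)"
proof -
  define s where "s = (\<lambda>(l, k). \<Sum>(v, v')\<in>block_pairs b n l k. adj \<omega> v v')"
  define m where "m = (\<lambda>(l, k). npair b n l k)"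
  note fin = finite_upairs[of K]
  have s_m: "0 \<le> s x \<and> s x \<le> m x" if x_U: "x \<in> upairs K" for x
  proof -
    obtain l k where x: "x = (l, k)" "l \<le> k" using x_U by (cases x) (auto simp: upairs_def)
    have "card {e \<in> block_edges b n l k. \<omega> e} \<le> card (block_edges b n l k)"
      by (intro card_mono finite_block_edges) auto
    then show ?thesis
      using x by (simp add: s_def m_def sum_adj_block_pairs card_block_edges)
  qed
  \<comment> \<open>within each motif class the pooled estimate \<open>Bhat0\<close> fits at least as well as the true \<open>p \<gamma>\<close>\<close>
  have class_le: "(\<Sum>(l, k)\<in>motif_class g K \<gamma>. npair b n l k * bern_kl (Bhat1 b n \<omega> l k) (Bhat0 b n g K \<omega> \<gamma>))
      \<le> (\<Sum>x\<in>motif_class g K \<gamma>. block_kl b n g p x \<omega>)" if "\<gamma> \<in> g ` upairs K" for \<gamma>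
  proof -
    have C: "motif_class g K \<gamma> \<subseteq> upairs K" "finite (motif_class g K \<gamma>)"
      using fin by (auto simp: motif_class_def)
    have "(\<Sum>(l, k)\<in>motif_class g K \<gamma>. npair b n l k * bern_kl (Bhat1 b n \<omega> l k) (Bhat0 b n g K \<omega> \<gamma>))
        = (\<Sum>x\<in>motif_class g K \<gamma>. m x * bern_kl (s x / m x)
            (sum s (motif_class g K \<gamma>) / sum m (motif_class g K \<gamma>)))"
      by (intro sum.cong refl) (auto simp: m_def s_def Bhat1_def Bhat0_def n_gamma_def)
    also have "\<dots> \<le> (\<Sum>x\<in>motif_class g K \<gamma>. m x * bern_kl (s x / m x) (p \<gamma>))"
      using C s_m p that by (intro sum_bern_kl_pooled_le) auto
    also have "\<dots> = (\<Sum>x\<in>motif_class g K \<gamma>. block_kl b n g p x \<omega>)"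
      by (intro sum.cong refl)
        (auto simp: motif_class_def block_kl_def m_def s_def Bhat1_def)
    finally show ?thesis .
  qed
  have "neg2lambda b n g K \<omega> \<le> 2 * (\<Sum>\<gamma>\<in>g ` upairs K. \<Sum>x\<in>motif_class g K \<gamma>. block_kl b n g p x \<omega>)"
    unfolding neg2lambda_def using class_le by (simp add: sum_mono)
  also have "(\<Sum>\<gamma>\<in>g ` upairs K. \<Sum>x\<in>motif_class g K \<gamma>. block_kl b n g p x \<omega>)
      = (\<Sum>x\<in>upairs K. block_kl b n g p x \<omega>)"
    using sum.image_gen[OF fin, of "\<lambda>x. block_kl b n g p x \<omega>" g]
    by (simp add: motif_class_def)
  finally show ?thesis .
qed

lemma block_kl_cong:
  assumes "l \<le> k" "\<And>e. e \<in> block_edges b n l k \<Longrightarrow> \<omega> e = \<omega>' e"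
  shows "block_kl b n g p (l, k) \<omega> = block_kl b n g p (l, k) \<omega>'"
proof -
  have "{e \<in> block_edges b n l k. \<omega> e} = {e \<in> block_edges b n l k. \<omega>' e}"
    using assms(2) by auto
  then show ?thesis by (simp add: assms(1) block_kl_def Bhat1_eq_card)
qed

lemma null_law_eq_Pi_pmf:
  "null_law b g p n = Pi_pmf (edges n) False (\<lambda>e. bernoulli_pmf (p (g (edge_block b e))))"
  by (simp add: null_law_def edge_block_def sorted_pair_def case_prod_unfold)

lemma nn_integral_exp_block_kl_le:
  assumes lk: "l \<le> k" and p: "0 < p (g (l, k))" "p (g (l, k)) < 1"
  shows "(\<integral>\<^sup>+\<omega>. exp (block_kl b n g p (l, k) \<omega> / 2)
      \<partial>Pi_pmf (block_edges b n l k) False (\<lambda>e. bernoulli_pmf (p (g (edge_block b e))))) \<le> 9"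
proof -
  define q where "q = p (g (l, k))"
  define E where "E = block_edges b n l k"
  define m where "m = npair b n l k"
  have "Pi_pmf E False (\<lambda>e. bernoulli_pmf (p (g (edge_block b e)))) = Pi_pmf E False (\<lambda>_. bernoulli_pmf q)"
    by (intro Pi_pmf_cong refl) (simp add: E_def q_def edge_block_block_edges lk)
  moreover have "binomial_pmf m q = map_pmf (\<lambda>\<omega>. card {e \<in> E. \<omega> e}) (Pi_pmf E False (\<lambda>_. bernoulli_pmf q))"
    using p by (intro binomial_pmf_altdef')
      (auto simp: E_def m_def q_def finite_block_edges card_block_edges lk)
  moreover have "block_kl b n g p (l, k) \<omega> = real m * bern_kl (card {e \<in> E. \<omega> e} / real m) q" for \<omega>
    by (simp add: block_kl_def Bhat1_eq_card lk E_def m_def q_def)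
  ultimately have "(\<integral>\<^sup>+\<omega>. exp (block_kl b n g p (l, k) \<omega> / 2)
      \<partial>Pi_pmf E False (\<lambda>e. bernoulli_pmf (p (g (edge_block b e)))))
      = (\<integral>\<^sup>+c. exp (real m * bern_kl (real c / real m) q / 2) \<partial>measure_pmf (binomial_pmf m q))"
    by simp
  also have "\<dots> \<le> 9"
    using p by (intro binomial_pmf_nn_integral_exp_bern_kl_le) (auto simp: q_def)
  finally show ?thesis by (simp add: E_def)
qed

lemma nn_integral_exp_sum_block_kl_le:
  assumes b_K: "\<And>v. v < n \<Longrightarrow> b v < K"
    and p: "\<And>\<gamma>. \<gamma> \<in> g ` upairs K \<Longrightarrow> 0 < p \<gamma> \<and> p \<gamma> < 1"
  shows "(\<integral>\<^sup>+\<omega>. exp ((\<Sum>x\<in>upairs K. block_kl b n g p x \<omega>) / 2) \<partial>null_law b g p n)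
    \<le> 9 ^ card (upairs K)"
proof -
  define D where "D = (\<lambda>e. bernoulli_pmf (p (g (edge_block b e))))"
  define E where "E = (\<lambda>(l, k). block_edges b n l k)"
  have law: "null_law b g p n = Pi_pmf (\<Union>x\<in>upairs K. E x) False D"
    using UN_block_edges[of n b K] b_K by (simp add: null_law_eq_Pi_pmf D_def E_def)
  have "(\<integral>\<^sup>+\<omega>. exp ((\<Sum>x\<in>upairs K. block_kl b n g p x \<omega>) / 2) \<partial>null_law b g p n)
      = (\<integral>\<^sup>+\<omega>. (\<Prod>x\<in>upairs K. ennreal (exp (block_kl b n g p x \<omega> / 2))) \<partial>null_law b g p n)"
    unfolding sum_divide_distrib exp_sum[OF finite_upairs] by (simp add: prod_ennreal)
  also have "\<dots> = (\<Prod>x\<in>upairs K. \<integral>\<^sup>+\<omega>. exp (block_kl b n g p x \<omega> / 2) \<partial>Pi_pmf (E x) False D)"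
    unfolding law
  proof (rule nn_integral_Pi_pmf_prod_disjoint[OF finite_upairs])
    show "finite (E x)" for x by (simp add: E_def finite_block_edges split: prod.split)
    show "disjoint_family_on E (upairs K)" unfolding E_def by (rule disjoint_family_on_block_edges)
  next
    fix x and \<omega> \<omega>' :: "nat \<times> nat \<Rightarrow> bool"
    assume x_U: "x \<in> upairs K" and agree: "\<And>e. e \<in> E x \<Longrightarrow> \<omega> e = \<omega>' e"
    obtain l k where "x = (l, k)" "l \<le> k" using x_U by (cases x) (auto simp: upairs_def)
    with agree show "ennreal (exp (block_kl b n g p x \<omega> / 2)) = ennreal (exp (block_kl b n g p x \<omega>' / 2))"
      using block_kl_cong[of l k b n \<omega> \<omega>' g p] by (simp add: E_def)
  qed
  also have "\<dots> \<le> (\<Prod>x\<in>upairs K. 9)"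
  proof (intro prod_mono_ennreal)
    fix x assume x_U: "x \<in> upairs K"
    then obtain l k where x: "x = (l, k)" "l \<le> k" by (cases x) (auto simp: upairs_def)
    have "0 < p (g (l, k)) \<and> p (g (l, k)) < 1" using p x_U x(1) by blast
    then show "(\<integral>\<^sup>+\<omega>. exp (block_kl b n g p x \<omega> / 2) \<partial>Pi_pmf (E x) False D) \<le> 9"
      unfolding x(1) E_def D_def using x(2) by (auto intro: nn_integral_exp_block_kl_le)
  qed
  finally show ?thesis by simp
qed

lemma prob_sum_block_kl_ge_le:
  assumes "\<And>v. v < n \<Longrightarrow> b v < K"
    and "\<And>\<gamma>. \<gamma> \<in> g ` upairs K \<Longrightarrow> 0 < p \<gamma> \<and> p \<gamma> < 1"
  shows "measure_pmf.prob (null_law b g p n) {\<omega>. T \<le> (\<Sum>x\<in>upairs K. block_kl b n g p x \<omega>)}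
    \<le> exp (- T / 2) * 9 ^ card (upairs K)"
proof -
  define Z where "Z \<omega> = (\<Sum>x\<in>upairs K. block_kl b n g p x \<omega>)" for \<omega>
  have "emeasure (null_law b g p n) {\<omega>. T \<le> Z \<omega>}
      \<le> ennreal (exp (- T / 2)) * (\<integral>\<^sup>+\<omega>. exp (Z \<omega> / 2) \<partial>null_law b g p n)"
    using Chernoff_ineq_nn_integral_ge[of "1 / 2" UNIV "null_law b g p n" Z T] by simp
  also have "\<dots> \<le> ennreal (exp (- T / 2)) * 9 ^ card (upairs K)"
    using nn_integral_exp_sum_block_kl_le[OF assms] by (intro mult_left_mono) (simp_all add: Z_def)
  also have "\<dots> = ennreal (exp (- T / 2) * 9 ^ card (upairs K))"
    by (simp add: ennreal_mult flip: ennreal_power)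
  finally show ?thesis
    by (simp add: Z_def measure_pmf.emeasure_eq_measure)
qed

lemma prob_Delta_BIC_nonneg_le:
  assumes "\<And>v. v < n \<Longrightarrow> b v < K"
    and "\<And>\<gamma>. \<gamma> \<in> g ` upairs K \<Longrightarrow> 0 < p \<gamma> \<and> p \<gamma> < 1"
  shows "measure_pmf.prob (null_law b g p n) {\<omega>. \<not> Delta_BIC b n g K \<omega> < 0}
    \<le> exp (- ((\<Sum>\<gamma>\<in>g ` upairs K. real (card (motif_class g K \<gamma>)) - 1)
              * ln (real (n choose 2)) / 4)) * 9 ^ card (upairs K)"
proof -
  define penalty where "penalty =
    (\<Sum>\<gamma>\<in>g ` upairs K. real (card (motif_class g K \<gamma>)) - 1) * ln (real (n choose 2))"
  have "{\<omega>. \<not> Delta_BIC b n g K \<omega> < 0}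
      \<subseteq> {\<omega>. penalty / 2 \<le> (\<Sum>x\<in>upairs K. block_kl b n g p x \<omega>)}"
  proof (intro subsetI CollectI, elim CollectE)
    fix \<omega> assume "\<not> Delta_BIC b n g K \<omega> < 0"
    then have "penalty \<le> neg2lambda b n g K \<omega>" unfolding Delta_BIC_def penalty_def by linarith
    with neg2lambda_le_sum_block_kl[of g K p b n \<omega>, OF assms(2)]
    show "penalty / 2 \<le> (\<Sum>x\<in>upairs K. block_kl b n g p x \<omega>)" by simp
  qed
  then have "measure_pmf.prob (null_law b g p n) {\<omega>. \<not> Delta_BIC b n g K \<omega> < 0}
      \<le> measure_pmf.prob (null_law b g p n) {\<omega>. penalty / 2 \<le> (\<Sum>x\<in>upairs K. block_kl b n g p x \<omega>)}"
    by (intro measure_pmf.finite_measure_mono) auto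
  also have "\<dots> \<le> exp (- (penalty / 4)) * 9 ^ card (upairs K)"
    using prob_sum_block_kl_ge_le[OF assms, where T = "penalty / 2"] by simp
  finally show ?thesis by (simp only: penalty_def)
qed

section \<open>Counting block pairs\<close>

lemma card_upairs: "2 * card (upairs K) = K * K + K"
proof (induction K)
  case (Suc K)
  have "upairs (Suc K) = upairs K \<union> (\<lambda>l. (l, K)) ` {..K}"
    by (auto simp: upairs_def)
  moreover have "upairs K \<inter> (\<lambda>l. (l, K)) ` {..K} = {}"
    by (auto simp: upairs_def)
  ultimately have "card (upairs (Suc K)) = card (upairs K) + Suc K"
    using finite_upairs by (simp add: card_Un_disjoint card_image inj_on_def)
  then show ?case using Suc.IH by simp
qed (simp add: upairs_def)

lemma real_card_upairs: "real K^2 + real K = 2 * real (card (upairs K))"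
  using arg_cong[OF card_upairs[of K], of real] by (simp add: power2_eq_square)

lemma one_le_card_upairs: "0 < K \<Longrightarrow> 1 \<le> card (upairs K)"
  using card_upairs[of K] by (cases "card (upairs K)") auto

lemma sum_card_motif_class: "(\<Sum>\<gamma>\<in>g ` upairs K. card (motif_class g K \<gamma>)) = card (upairs K)"
  using sum.image_gen[OF finite_upairs[of K], of "\<lambda>_. 1 :: nat" g]
  by (simp add: motif_class_def)

lemma sum_card_motif_class_minus_one_ge:
  assumes "0 < K" "c \<le> (1/16) * (1 - 2 * real (card (g ` upairs K)) / (real K^2 + real K))"
  shows "16 * c * card (upairs K) \<le> (\<Sum>\<gamma>\<in>g ` upairs K. real (card (motif_class g K \<gamma>)) - 1)"
proof -
  define M where "M = real (card (upairs K))"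
  define G where "G = real (card (g ` upairs K))"
  have M1: "1 \<le> M" using one_le_card_upairs[OF assms(1)] by (simp add: M_def)
  have "16 * c \<le> 1 - G / M" using assms(2) unfolding real_card_upairs M_def G_def by simp
  then have "16 * c * M \<le> (1 - G / M) * M" using M1 by (intro mult_right_mono) auto
  also have "\<dots> = M - G" using M1 by (simp add: field_simps)
  also have "\<dots> = (\<Sum>\<gamma>\<in>g ` upairs K. real (card (motif_class g K \<gamma>)) - 1)"
    unfolding sum_subtractf M_def G_def sum_card_motif_class[of g K, symmetric] by simp
  finally show ?thesis by (simp add: M_def)
qed

lemma nmin_le_square:
  assumes "0 < K"
  shows "nmin b n K \<le> n * n"
proof -
  have "(0, 0) \<in> upairs K" using assms by (simp add: upairs_def)
  then have "nmin b n K \<in> (\<lambda>(l, k). npair b n l k) ` upairs K"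
    unfolding nmin_def using finite_upairs by (intro Min_in) auto
  then obtain l k where "nmin b n K = npair b n l k" by auto
  also have "npair b n l k \<le> card ({..<n} \<times> {..<n})"
    unfolding npair_def by (intro card_mono) (auto simp: block_pairs_def block_def)
  finally show ?thesis by simp
qed

lemma BIC_exponent_le:
  fixes M d L c c' r :: real
  assumes "1 \<le> M" "16 * c * M \<le> d" "4 \<le> c * L" "0 \<le> L" "0 \<le> c'" "c' \<le> c / 2" "r \<le> 2 * L"
  shows "- (d * L / 4) + M * ln 9 \<le> - 2 * M - c' * r"
proof -
  have "ln 9 \<le> (8 :: real)" using ln_le_minus_one[of 9] by simp
  then have "M * ln 9 \<le> 8 * M" using assms(1) by (simp add: mult.commute mult_left_mono)
  moreover have "c' * r \<le> c * L"
    using mult_left_mono[OF assms(7,5)] mult_right_mono[OF assms(6,4)] by simp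
  moreover have "16 * (c * L * M) \<le> d * L"
    using mult_right_mono[OF assms(2,4)] by (simp add: algebra_simps)
  moreover have "c * L \<le> c * L * M" "4 * M \<le> c * L * M"
    using assms(1,3) mult_left_mono[of 1 M "c * L"] mult_right_mono[of 4 "c * L" M] by simp_all
  ultimately show ?thesis using assms(1) by linarith
qed

lemma ln_le_ln_choose_two:
  assumes "3 \<le> n"
  shows "ln (real n) \<le> ln (real (n choose 2))"
proof -
  have "n * 2 \<le> n * (n - 1)" using assms by simp
  then have "n \<le> n choose 2" by (simp add: choose_two less_eq_div_iff_mult_less_eq)
  then show ?thesis using assms by simp
qed

lemma ln_nmin_le:
  assumes "0 < K" "3 \<le> n"
  shows "ln (real (nmin b n K)) \<le> 2 * ln (real (n choose 2))"
proof (cases "nmin b n K = 0")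
  case False
  have "real (nmin b n K) \<le> real n * real n"
    using nmin_le_square[OF assms(1), of b n] by (simp flip: of_nat_mult)
  then have "ln (real (nmin b n K)) \<le> ln (real n * real n)"
    using False by (intro ln_mono) auto
  also have "\<dots> = 2 * ln (real n)" using assms(2) by (simp add: ln_mult)
  finally show ?thesis using ln_le_ln_choose_two[OF assms(2)] by simp
qed (use ln_le_ln_choose_two[OF assms(2)] assms(2) in simp)

lemma prob_Delta_BIC_neg_ge:
  fixes c :: real
  assumes b_K: "\<And>v. v < n \<Longrightarrow> b v < K"
    and p: "\<And>\<gamma>. \<gamma> \<in> g ` upairs K \<Longrightarrow> 0 < p \<gamma> \<and> p \<gamma> < 1"
    and n: "3 \<le> n" "exp (4 / c) \<le> n"
    and c: "0 < c" "c \<le> (1/16) * (1 - 2 * real (card (g ` upairs K)) / (real K^2 + real K))"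
  shows "1 - exp (- (real K^2 + real K) - c * ln (real (nmin b n K)) / (2 + 2 * sqrt c / 3))
    \<le> measure_pmf.prob (null_law b g p n) {\<omega>. Delta_BIC b n g K \<omega> < 0}"
proof -
  define M where "M = real (card (upairs K))"
  define d where "d = (\<Sum>\<gamma>\<in>g ` upairs K. real (card (motif_class g K \<gamma>)) - 1)"
  define L where "L = ln (real (n choose 2))"
  define c' where "c' = c / (2 + 2 * sqrt c / 3)"
  have K_pos: "0 < K" using b_K[of 0] n(1) by simp
  have M1: "1 \<le> M" using one_le_card_upairs[OF K_pos] by (simp add: M_def)
  have d: "16 * c * M \<le> d"
    using sum_card_motif_class_minus_one_ge[OF K_pos c(2)] by (simp add: M_def d_def)
  have "4 / c = ln (exp (4 / c))" by simp
  also have "\<dots> \<le> ln n" using n(2) by (intro ln_mono) auto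
  also have "\<dots> \<le> L" unfolding L_def by (rule ln_le_ln_choose_two[OF n(1)])
  finally have "4 / c \<le> L" .
  then have cL: "4 \<le> c * L"
    using pos_divide_le_eq[OF c(1)] by (simp add: mult.commute)
  have L: "0 \<le> L"
    using \<open>4 / c \<le> L\<close> c(1) by (smt (verit) divide_pos_pos)
  have c': "0 \<le> c'" "c' \<le> c / 2"
    unfolding c'_def using c(1) by (simp, intro divide_left_mono) (auto intro!: add_pos_nonneg)
  have "(9 :: real) ^ card (upairs K) = exp (M * ln 9)"
    by (simp add: M_def exp_of_nat_mult)
  then have "measure_pmf.prob (null_law b g p n) {\<omega>. \<not> Delta_BIC b n g K \<omega> < 0}
      \<le> exp (- (d * L / 4)) * exp (M * ln 9)"
    using prob_Delta_BIC_nonneg_le[OF b_K p] unfolding d_def L_def by simp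
  also have "\<dots> \<le> exp (- (real K^2 + real K) - c' * ln (real (nmin b n K)))"
    unfolding real_card_upairs M_def[symmetric] exp_add[symmetric]
    using BIC_exponent_le[OF M1 d cL L c' ln_nmin_le[OF K_pos n(1), folded L_def]] by simp
  finally have "measure_pmf.prob (null_law b g p n) {\<omega>. \<not> Delta_BIC b n g K \<omega> < 0}
      \<le> exp (- (real K^2 + real K) - c' * ln (real (nmin b n K)))" .
  moreover have "{\<omega>. Delta_BIC b n g K \<omega> < 0} = UNIV - {\<omega>. \<not> Delta_BIC b n g K \<omega> < 0}"
    by auto
  ultimately show ?thesis
    using measure_pmf.prob_compl[of "{\<omega>. \<not> Delta_BIC b n g K \<omega> < 0}" "null_law b g p n"]
    by (simp add: c'_def)
qed

theorem theorem2:
  fixes K :: "nat \<Rightarrow> nat"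
    and blk :: "nat \<Rightarrow> nat \<Rightarrow> nat"
    and gam :: "nat \<Rightarrow> nat \<times> nat \<Rightarrow> 'g"
    and p0 :: "nat \<Rightarrow> 'g \<Rightarrow> real"
    and n0 :: nat and c1 c2 :: real
  assumes blocks_range: "\<And>n v. v < n \<Longrightarrow> blk n v < K n"
    and blocks_nonempty: "\<And>n l. l < K n \<Longrightarrow> block (blk n) n l \<noteq> {}"
    and p0_range: "\<And>n \<gamma>. \<gamma> \<in> gam n ` upairs (K n) \<Longrightarrow> 0 < p0 n \<gamma> \<and> p0 n \<gamma> < 1"
    and c1: "0 < c1" "c1 < 1/2"
    and lower: "\<And>n l k. n > n0 \<Longrightarrow> (l, k) \<in> upairs (K n) \<Longrightarrow>
        p0 n (gam n (l, k)) > ln (real (npair (blk n) n l k)) / real (npair (blk n) n l k)"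
    and upper: "\<And>n l k. n > n0 \<Longrightarrow> (l, k) \<in> upairs (K n) \<Longrightarrow>
        p0 n (gam n (l, k)) < 1/2 - c1"
    and c2: "0 < c2"
      "\<And>n. n > n0 \<Longrightarrow> c2 \<le> (1/16) * (1 - 2 * real (card (gam n ` upairs (K n)))
                                         / (real (K n)^2 + real (K n)))"
  shows "\<exists>C N. \<forall>n\<ge>N.
           measure_pmf.prob (null_law (blk n) (gam n) (p0 n) n)
             {\<omega>. Delta_BIC (blk n) n (gam n) (K n) \<omega> < 0}
           \<ge> 1 - C * exp (- (real (K n)^2 + real (K n))
                         - c2 * ln (real (nmin (blk n) n (K n))) / (2 + 2 * sqrt c2 / 3))"
proof -
  define N where "N = max (n0 + 1) (max 3 (nat \<lceil>exp (4 / c2)\<rceil>))"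
  have "1 - 1 * exp (- (real (K n)^2 + real (K n))
          - c2 * ln (real (nmin (blk n) n (K n))) / (2 + 2 * sqrt c2 / 3))
        \<le> measure_pmf.prob (null_law (blk n) (gam n) (p0 n) n)
             {\<omega>. Delta_BIC (blk n) n (gam n) (K n) \<omega> < 0}" if "N \<le> n" for n
  proof -
    have "n0 < n" "3 \<le> n" using that by (auto simp: N_def)
    moreover have "exp (4 / c2) \<le> real n"
      using that real_nat_ceiling_ge[of "exp (4 / c2)"] by (auto simp: N_def)
    ultimately show ?thesis
      using prob_Delta_BIC_neg_ge[OF blocks_range p0_range _ _ c2(1) c2(2)] by simp
  qed
  then show ?thesis by blast
qed

end
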